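(* Let $n\ge2$ and let $I$ be an ideal of $\Phi_{A_{n-1}}$ such that $I^c$ is full. Let $A^{(1)}|\dots|A^{(r)}$ be the partition of $[n]$ in accordance with $I$. Then for $1\le x<y\le n$, one has $e_x-e_y\in I^c$ if and only if either $x$ and $y$ lie in the same block $A^{(u)}$, or $x\in A^{(u)}$, $y\in A^{(v)}$ with $u\ne v$ and $s_I(A^{(u)})\cap s_I(A^{(v)})\neq\emptyset$. Equivalently, identifying $e_x-e_y$ with the pair $\{x,y\}$, $$I^c=\bigsqcup_{u=1}^r\Big(\binom{A^{(u)}}{2}\ \sqcup\ \bigsqcup_{v\in R^{(u)}}\big\{\{x,y\}: x\in A^{(u)},\,y\in A^{(v)}\big\}\Big),$$ where $R^{(u)}=\{v\in\{u+1,\dots,r\}: s_I(A^{(u)})\cap s_I(A^{(v)})\ne\emptyset\}$.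
   Context: $\Phi^+_{A_{n-1}}=\{e_i-e_j:1\le i<j\le n\}$ with simple roots $e_i-e_{i+1}$, $i\in[n-1]$. The partial order $\preceq$ on $\Phi^+_{A_{n-1}}$: $u\preceq v$ iff $v-u$ is a nonnegative integer combination of simple roots; concretely $e_i-e_j\preceq e_{i'}-e_{j'}$ iff $i'\le i$ and $j\le j'$. An ideal is a subset $I\subseteq\Phi^+_{A_{n-1}}$ with $u\in I$, $u\preceq v\Rightarrow v\in I$; $I^c=\Phi^+_{A_{n-1}}\setminus I$. $I^c$ is full if it contains every simple root $e_i-e_{i+1}$. Let $e_{i_1}-e_{j_1},\dots,e_{i_k}-e_{j_k}$ be the maximal elements of $I^c$ (the generators). The signature of $u\in[n]$ is $s_I(u)=\{l\in[k]: i_l\le u\le j_l\}$. The partition of $[n]$ in accordance with $I$ is the partition $A^{(1)}|\dots|A^{(r)}$ into the maximal nonempty subsets on which $s_I$ is constant, indexed so that $\min A^{(1)}<\dots<\min A^{(r)}$; $s_I(A^{(u)})$ denotes the common value of $s_I$ on $A^{(u)}$. *)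

theory Defs
  imports Main
begin

text \<open>Positive roots of type A_{n-1}: the root e_i - e_j (1 <= i < j <= n) is
  represented by the pair (i, j).\<close>
definition pos_roots :: "nat \<Rightarrow> (nat \<times> nat) set" where
  "pos_roots n = {(i, j). 1 \<le> i \<and> i < j \<and> j \<le> n}"

definition root_le :: "nat \<times> nat \<Rightarrow> nat \<times> nat \<Rightarrow> bool" where
  "root_le u v \<longleftrightarrow> fst v \<le> fst u \<and> snd u \<le> snd v"

definition is_ideal :: "nat \<Rightarrow> (nat \<times> nat) set \<Rightarrow> bool" where
  "is_ideal n I \<longleftrightarrow> I \<subseteq> pos_roots n \<and>
     (\<forall>u\<in>I. \<forall>v\<in>pos_roots n. root_le u v \<longrightarrow> v \<in> I)"

definition compl_ideal :: "nat \<Rightarrow> (nat \<times> nat) set \<Rightarrow> (nat \<times> nat) set" where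
  "compl_ideal n I = pos_roots n - I"

definition is_full :: "nat \<Rightarrow> (nat \<times> nat) set \<Rightarrow> bool" where
  "is_full n I \<longleftrightarrow> (\<forall>i. 1 \<le> i \<and> i \<le> n - 1 \<longrightarrow> (i, i + 1) \<in> compl_ideal n I)"

definition generators :: "nat \<Rightarrow> (nat \<times> nat) set \<Rightarrow> (nat \<times> nat) set" where
  "generators n I = {g \<in> compl_ideal n I.
     \<forall>v\<in>compl_ideal n I. root_le g v \<longrightarrow> v = g}"

text \<open>Signature of u: the set of generators e_{i_l} - e_{j_l} with i_l <= u <= j_l
  (the generators themselves serve as the index set [k]).\<close>
definition signature :: "nat \<Rightarrow> (nat \<times> nat) set \<Rightarrow> nat \<Rightarrow> (nat \<times> nat) set" where
  "signature n I u = {g \<in> generators n I. fst g \<le> u \<and> u \<le> snd g}"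

definition sig_const :: "nat \<Rightarrow> (nat \<times> nat) set \<Rightarrow> nat set \<Rightarrow> bool" where
  "sig_const n I B \<longleftrightarrow> (\<forall>x\<in>B. \<forall>y\<in>B. signature n I x = signature n I y)"

definition blocks :: "nat \<Rightarrow> (nat \<times> nat) set \<Rightarrow> nat set set" where
  "blocks n I = {B. B \<noteq> {} \<and> B \<subseteq> {1..n} \<and> sig_const n I B \<and>
     (\<forall>B'. B \<subseteq> B' \<and> B' \<subseteq> {1..n} \<and> sig_const n I B' \<longrightarrow> B' = B)}"

end

theory Submission
  imports Defs
begin

text \<open>Since I is an up-set, its complement is a down-set, so a root e_x - e_y lies in I^c
  iff it lies below a generator e_i - e_j, i.e. iff i \<le> x < y \<le> j, i.e. iff the signatures of
  x and y meet. The blocks of the partition are exactly the level sets of the signature,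
  and fullness makes every signature nonempty, so two elements of one block also have
  meeting signatures.\<close>

lemma compl_ideal_downward_closed:
  assumes "is_ideal n I" "v \<in> compl_ideal n I" "u \<in> pos_roots n" "root_le u v"
  shows "u \<in> compl_ideal n I"
  using assms unfolding is_ideal_def compl_ideal_def by blast

text \<open>A generator above u is an element of I^c above u of maximal height snd - fst.\<close>

lemma generator_above:
  assumes "u \<in> compl_ideal n I"
  shows "\<exists>g\<in>generators n I. root_le u g"
proof -
  let ?P = "\<lambda>v. v \<in> compl_ideal n I \<and> root_le u v"
  let ?height = "\<lambda>v::nat \<times> nat. snd v - fst v"
  have bounded: "?height v < n + 1" if "?P v" for v
    using that by (auto simp: compl_ideal_def pos_roots_def)
  have "?P u" using assms by (simp add: root_le_def)
  then obtain g where g: "?P g" and g_max: "\<And>w. ?P w \<Longrightarrow> ?height w \<le> ?height g"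
    using ex_has_greatest_nat[of ?P u ?height "n + 1"] bounded by blast
  have "w = g" if "w \<in> compl_ideal n I" "root_le g w" for w
  proof -
    have "?P w" using that g by (auto simp: root_le_def)
    with g_max have "?height w \<le> ?height g" by blast
    moreover have "fst g < snd g" using g by (auto simp: compl_ideal_def pos_roots_def)
    moreover note that(2)[unfolded root_le_def]
    ultimately have "fst w = fst g \<and> snd w = snd g" by linarith
    then show "w = g" by (simp add: prod_eq_iff)
  qed
  with g show ?thesis unfolding generators_def by blast
qed

lemma compl_ideal_iff_signatures_meet:
  assumes "is_ideal n I" "1 \<le> x" "x < y" "y \<le> n"
  shows "(x, y) \<in> compl_ideal n I \<longleftrightarrow> signature n I x \<inter> signature n I y \<noteq> {}"
proof
  assume "(x, y) \<in> compl_ideal n I"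
  then obtain g where "g \<in> generators n I" "root_le (x, y) g"
    using generator_above by blast
  with assms show "signature n I x \<inter> signature n I y \<noteq> {}"
    unfolding signature_def root_le_def by auto
next
  assume "signature n I x \<inter> signature n I y \<noteq> {}"
  then obtain g where g: "g \<in> generators n I" "fst g \<le> x" "y \<le> snd g"
    unfolding signature_def by auto
  have "g \<in> compl_ideal n I" using g(1) unfolding generators_def by auto
  moreover have "(x, y) \<in> pos_roots n" using assms by (simp add: pos_roots_def)
  ultimately show "(x, y) \<in> compl_ideal n I"
    using compl_ideal_downward_closed[OF assms(1)] g by (auto simp: root_le_def)
qed

lemma signature_nonempty_if_full:
  assumes "n \<ge> 2" "is_ideal n I" "is_full n I" "1 \<le> z" "z \<le> n"
  shows "signature n I z \<noteq> {}"
proof -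
  define i where "i = (if z < n then z else n - 1)"
  have i: "1 \<le> i" "i < n" "i \<le> z" "z \<le> i + 1"
    using assms(1,4,5) by (auto simp: i_def)
  then have "(i, i + 1) \<in> compl_ideal n I" using assms(3) unfolding is_full_def by simp
  then obtain g where "g \<in> signature n I i" "g \<in> signature n I (i + 1)"
    using compl_ideal_iff_signatures_meet[OF assms(2), of i "i + 1"] i by auto
  then have "g \<in> signature n I z"
    using i unfolding signature_def by auto
  then show ?thesis by blast
qed

lemma signature_level_set_in_blocks:
  assumes "1 \<le> z" "z \<le> n"
  shows "{w \<in> {1..n}. signature n I w = signature n I z} \<in> blocks n I"
proof -
  let ?L = "{w \<in> {1..n}. signature n I w = signature n I z}"
  have "B = ?L" if "?L \<subseteq> B" "B \<subseteq> {1..n}" "sig_const n I B" for B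
  proof
    have "z \<in> B" using that(1) assms by auto
    with that(2,3) show "B \<subseteq> ?L" unfolding sig_const_def by blast
  qed (use that in blast)
  moreover have "z \<in> ?L" using assms by simp
  ultimately show ?thesis unfolding blocks_def sig_const_def by blast
qed

lemma signature_eq_if_same_block:
  assumes "B \<in> blocks n I" "x \<in> B" "y \<in> B"
  shows "signature n I x = signature n I y"
  using assms unfolding blocks_def sig_const_def by blast

theorem mainTheorem10:
  fixes n :: nat and I :: "(nat \<times> nat) set"
  assumes "n \<ge> 2" and "is_ideal n I" and "is_full n I"
    and "1 \<le> x" and "x < y" and "y \<le> n"
  shows "(x, y) \<in> compl_ideal n I \<longleftrightarrow>
    ((\<exists>B\<in>blocks n I. x \<in> B \<and> y \<in> B) \<or>
     (\<exists>B\<in>blocks n I. \<exists>C\<in>blocks n I. B \<noteq> C \<and> x \<in> B \<and> y \<in> C \<and>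
        (\<forall>b\<in>B. \<forall>c\<in>C. signature n I b \<inter> signature n I c \<noteq> {})))"
  (is "_ \<longleftrightarrow> ?same \<or> ?distinct")
proof -
  define Bx where "Bx = {w \<in> {1..n}. signature n I w = signature n I x}"
  define By where "By = {w \<in> {1..n}. signature n I w = signature n I y}"
  have blocks: "Bx \<in> blocks n I" "By \<in> blocks n I"
    unfolding Bx_def By_def using signature_level_set_in_blocks assms(4-6) by simp_all
  have members: "x \<in> Bx" "y \<in> By"
    unfolding Bx_def By_def using assms(4-6) by simp_all
  have "signature n I x \<noteq> {}"
    using signature_nonempty_if_full assms by simp
  then have "?same \<Longrightarrow> signature n I x \<inter> signature n I y \<noteq> {}"
    using signature_eq_if_same_block by (metis inf.idem)
  moreover have "?distinct \<Longrightarrow> signature n I x \<inter> signature n I y \<noteq> {}"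
    by blast
  moreover have "?same \<or> ?distinct" if meet: "signature n I x \<inter> signature n I y \<noteq> {}"
  proof (cases "Bx = By")
    case True
    then show ?thesis using blocks members by blast
  next
    case False
    have "\<forall>b\<in>Bx. \<forall>c\<in>By. signature n I b \<inter> signature n I c \<noteq> {}"
      using meet unfolding Bx_def By_def by simp
    then show ?thesis using blocks members False by blast
  qed
  ultimately show ?thesis
    using compl_ideal_iff_signatures_meet[OF assms(2,4-6)] by blast
qed

end
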